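(* Under the role-persistence and uniform-bound assumptions below, with $\mathbf M_t=\mathbf A_t\mathbf W_t$, $$\sup_{t\in\mathbb N}\|\mathbf A_{t+1}\mathbf W_{t+1}\mathbf A_t\mathbf W_t\|\le\bar\alpha<1.$$
   Context: Fix a finite node set $\mathcal V$ with $n=|\mathcal V|$ and a sequence of directed graphs $G_t=(\mathcal V,\mathcal E_t)$, $t\in\mathbb N$. In $G_t$, a node $i$ is a pure obligee if it has no outgoing edge in $\mathcal E_t$, and a principal otherwise. For each $t$, $\mathbf W_t=(w^t_{ij})$ is an entrywise nonnegative $n\times n$ matrix with $w^t_{ij}>0$ only if $(j,i)\in\mathcal E_t$ and with every row sum at most $1$; $\mathbf A_t=\mathrm{diag}(\alpha_i^t)$ with $\alpha_i^t\in[0,1]$, and $\alpha_i^t=1$ whenever $i$ is a pure obligee in $G_t$. Role persistence: for every $i$ and $t$, $i$ is a pure obligee in $G_t$ if and only if it is a pure obligee in $G_{t+1}$ (pure obligees stay pure obligees and principals stay principals). Uniform bound: there is $\bar\alpha\in(0,1)$ such that $\alpha_i^t\le\bar\alpha$ for every $t$ and every node $i$ that is not a pure obligee in $G_t$. $\|\mathbf M\|$ is the induced $\ell_\infty$ matrix norm (maximum absolute row sum). *)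

theory Defs
  imports "HOL-Analysis.Analysis"
begin

text \<open>Nodes are the elements of a finite type 'n; matrices are real^'n^'n,
  with entry (i,j) written M $ i $ j. An edge (j,i) is an edge from j to i.\<close>

definition pure_obligee :: "('n \<times> 'n) set \<Rightarrow> 'n \<Rightarrow> bool" where
  "pure_obligee E i \<longleftrightarrow> (\<forall>j. (i, j) \<notin> E)"

definition diag_mat :: "('n::finite \<Rightarrow> real) \<Rightarrow> real^'n^'n" where
  "diag_mat a = (\<chi> i j. if i = j then a i else 0)"

definition linf_norm :: "real^'n::finite^'n \<Rightarrow> real" where
  "linf_norm M = Max (range (\<lambda>i. \<Sum>j\<in>UNIV. \<bar>M $ i $ j\<bar>))"

end

theory Submission
  imports Defs
begin

text \<open>Split the product as (A' W' A) W. Since every row of W sums to at most 1, the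
  induced norm of W is at most 1, so by submultiplicativity it suffices to bound A' W' A.
  A nonzero entry w'_ik of W' is an edge from k, so k is a principal at time t+1 and, by
  role persistence, also at time t; hence the column weight alpha_k of A is at most
  alpha-bar wherever W' does not vanish, and every row of A' W' A sums to at most alpha-bar.\<close>

lemma linf_norm_le_iff:
  fixes M :: "real^'n::finite^'n"
  shows "linf_norm M \<le> c \<longleftrightarrow> (\<forall>i. (\<Sum>j\<in>UNIV. \<bar>M $ i $ j\<bar>) \<le> c)"
  unfolding linf_norm_def by (subst Max_le_iff) auto

lemma row_sum_le_linf_norm:
  fixes M :: "real^'n::finite^'n"
  shows "(\<Sum>j\<in>UNIV. \<bar>M $ i $ j\<bar>) \<le> linf_norm M"
  unfolding linf_norm_def by (rule Max_ge) auto

lemma linf_norm_nonneg: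
  fixes M :: "real^'n::finite^'n"
  shows "0 \<le> linf_norm M"
  by (rule order_trans[OF sum_nonneg row_sum_le_linf_norm]) auto

lemma linf_norm_mult_le:
  fixes A B :: "real^'n::finite^'n"
  shows "linf_norm (A ** B) \<le> linf_norm A * linf_norm B"
  unfolding linf_norm_le_iff
proof
  fix i
  have "(\<Sum>j\<in>UNIV. \<bar>(A ** B) $ i $ j\<bar>) \<le> (\<Sum>j\<in>UNIV. \<Sum>k\<in>UNIV. \<bar>A $ i $ k\<bar> * \<bar>B $ k $ j\<bar>)"
    unfolding matrix_matrix_mult_def
    by (rule sum_mono) (simp add: order_trans[OF sum_abs] abs_mult)
  also have "\<dots> = (\<Sum>k\<in>UNIV. \<bar>A $ i $ k\<bar> * (\<Sum>j\<in>UNIV. \<bar>B $ k $ j\<bar>))"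
    by (subst sum.swap) (simp add: sum_distrib_left)
  also have "\<dots> \<le> (\<Sum>k\<in>UNIV. \<bar>A $ i $ k\<bar> * linf_norm B)"
    by (intro sum_mono mult_left_mono row_sum_le_linf_norm) simp
  also have "\<dots> \<le> linf_norm A * linf_norm B"
    by (simp add: sum_distrib_right[symmetric] mult_right_mono
        row_sum_le_linf_norm linf_norm_nonneg)
  finally show "(\<Sum>j\<in>UNIV. \<bar>(A ** B) $ i $ j\<bar>) \<le> linf_norm A * linf_norm B" .
qed

lemma linf_norm_substochastic_le_1:
  fixes W :: "real^'n::finite^'n"
  assumes "\<And>i j. W $ i $ j \<ge> 0" and "\<And>i. (\<Sum>j\<in>UNIV. W $ i $ j) \<le> 1"
  shows "linf_norm W \<le> 1"
  using assms by (simp add: linf_norm_le_iff)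

lemma diag_mat_mult_entry:
  fixes a :: "'n::finite \<Rightarrow> real" and W :: "real^'n^'n"
  shows "(diag_mat a ** W) $ i $ j = a i * W $ i $ j"
proof -
  have "(diag_mat a ** W) $ i $ j = (\<Sum>k\<in>UNIV. (if i = k then a i else 0) * W $ k $ j)"
    by (simp add: matrix_matrix_mult_def diag_mat_def)
  also have "\<dots> = (\<Sum>k\<in>UNIV. if k = i then a i * W $ i $ j else 0)"
    by (rule sum.cong) auto
  finally show ?thesis by simp
qed

lemma mult_diag_mat_entry:
  fixes a :: "'n::finite \<Rightarrow> real" and W :: "real^'n^'n"
  shows "(W ** diag_mat a) $ i $ j = W $ i $ j * a j"
proof -
  have "(W ** diag_mat a) $ i $ j = (\<Sum>k\<in>UNIV. W $ i $ k * (if k = j then a k else 0))"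
    by (simp add: matrix_matrix_mult_def diag_mat_def)
  also have "\<dots> = (\<Sum>k\<in>UNIV. if k = j then W $ i $ j * a j else 0)"
    by (rule sum.cong) auto
  finally show ?thesis by simp
qed

lemma linf_norm_diag_mult_diag_le:
  fixes a b :: "'n::finite \<Rightarrow> real" and W :: "real^'n^'n"
  assumes W_nonneg: "\<And>i j. W $ i $ j \<ge> 0"
    and W_rows: "\<And>i. (\<Sum>j\<in>UNIV. W $ i $ j) \<le> 1"
    and a_range: "\<And>i. 0 \<le> a i \<and> a i \<le> 1"
    and b_nonneg: "\<And>j. 0 \<le> b j"
    and b_bound: "\<And>i j. W $ i $ j > 0 \<Longrightarrow> b j \<le> c"
    and c_nonneg: "0 \<le> c"
  shows "linf_norm (diag_mat a ** W ** diag_mat b) \<le> c"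
  unfolding linf_norm_le_iff
proof
  fix i
  have entry_le: "\<bar>a i * W $ i $ j * b j\<bar> \<le> W $ i $ j * c" for j
  proof (cases "W $ i $ j > 0")
    case True
    have "a i * W $ i $ j * b j \<le> 1 * W $ i $ j * b j"
      using a_range W_nonneg b_nonneg by (intro mult_right_mono) auto
    also have "\<dots> \<le> W $ i $ j * c"
      using b_bound[OF True] True by simp
    finally show ?thesis
      using a_range W_nonneg b_nonneg by simp
  next
    case False
    then show ?thesis using W_nonneg[of i j] by simp
  qed
  have "(\<Sum>j\<in>UNIV. \<bar>(diag_mat a ** W ** diag_mat b) $ i $ j\<bar>) \<le> (\<Sum>j\<in>UNIV. W $ i $ j * c)"
    by (simp add: mult_diag_mat_entry diag_mat_mult_entry sum_mono entry_le)
  also have "\<dots> \<le> c"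
    using mult_right_mono[OF W_rows c_nonneg] by (simp add: sum_distrib_right)
  finally show "(\<Sum>j\<in>UNIV. \<bar>(diag_mat a ** W ** diag_mat b) $ i $ j\<bar>) \<le> c" .
qed

theorem mainTheorem13:
  fixes E :: "nat \<Rightarrow> ('n::finite \<times> 'n) set"
    and W :: "nat \<Rightarrow> real^'n^'n"
    and \<alpha> :: "nat \<Rightarrow> 'n \<Rightarrow> real"
    and \<alpha>bar :: real
  assumes W_nonneg: "\<And>t i j. W t $ i $ j \<ge> 0"
    and W_support: "\<And>t i j. W t $ i $ j > 0 \<Longrightarrow> (j, i) \<in> E t"
    and W_rows: "\<And>t i. (\<Sum>j\<in>UNIV. W t $ i $ j) \<le> 1"
    and \<alpha>_range: "\<And>t i. 0 \<le> \<alpha> t i \<and> \<alpha> t i \<le> 1"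
    and \<alpha>_obligee: "\<And>t i. pure_obligee (E t) i \<Longrightarrow> \<alpha> t i = 1"
    and role_persistence: "\<And>t i. pure_obligee (E t) i \<longleftrightarrow> pure_obligee (E (Suc t)) i"
    and \<alpha>bar_range: "0 < \<alpha>bar" "\<alpha>bar < 1"
    and uniform_bound: "\<And>t i. \<not> pure_obligee (E t) i \<Longrightarrow> \<alpha> t i \<le> \<alpha>bar"
  shows "\<forall>t. linf_norm (diag_mat (\<alpha> (Suc t)) ** W (Suc t) ** diag_mat (\<alpha> t) ** W t) \<le> \<alpha>bar"
proof
  fix t
  have "\<alpha> t k \<le> \<alpha>bar" if "W (Suc t) $ i $ k > 0" for i k
  proof -
    have "\<not> pure_obligee (E (Suc t)) k"
      using W_support[OF that] by (auto simp: pure_obligee_def)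
    then show ?thesis
      using role_persistence uniform_bound by blast
  qed
  then have middle: "linf_norm (diag_mat (\<alpha> (Suc t)) ** W (Suc t) ** diag_mat (\<alpha> t)) \<le> \<alpha>bar"
    using W_nonneg W_rows \<alpha>_range \<alpha>bar_range by (intro linf_norm_diag_mult_diag_le) auto
  have "linf_norm (diag_mat (\<alpha> (Suc t)) ** W (Suc t) ** diag_mat (\<alpha> t) ** W t)
      \<le> linf_norm (diag_mat (\<alpha> (Suc t)) ** W (Suc t) ** diag_mat (\<alpha> t)) * linf_norm (W t)"
    by (rule linf_norm_mult_le)
  also have "\<dots> \<le> \<alpha>bar * 1"
    using middle linf_norm_substochastic_le_1[OF W_nonneg W_rows] \<alpha>bar_range
    by (intro mult_mono) (auto simp: linf_norm_nonneg)
  finally show "linf_norm (diag_mat (\<alpha> (Suc t)) ** W (Suc t) ** diag_mat (\<alpha> t) ** W t) \<le> \<alpha>bar"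
    by simp
qed

end
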